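(* Let $G$ be a finite simple connected graph containing no cycle of length $3$ and no cycle of length $5$ as a subgraph, and let $\kappa>0$ be such that $\kappa_{LLY}(u,v)\ge\kappa$ for every edge $uv$ of $G$. Then for any vertex $x$ and any vertex $y$ with $d(x,y)=i$, where $1\le i\le \mathrm{diam}(G)\le\lfloor 2/\kappa\rfloor$, $$|\Gamma^+_x(y)|+|\Gamma^0_x(y)|\le\left(1-\frac{i\kappa}{2}\right)d_y.$$
   Context: For vertices $u,v$ of a connected graph $G$, $d(u,v)$ is the graph distance, $\mathrm{diam}(G)=\max_{u,v}d(u,v)$, $N(v)$ is the neighborhood of $v$ and $d_v=|N(v)|$. For vertices $x,y$: $\Gamma^-_x(y)=\{u\in N(y): d(x,u)=d(x,y)-1\}$, $\Gamma^0_x(y)=\{u\in N(y): d(x,u)=d(x,y)\}$, $\Gamma^+_x(y)=\{u\in N(y): d(x,u)=d(x,y)+1\}$. For $0\le\alpha<1$, the $\alpha$-lazy random walk is $m_x^\alpha(x)=\alpha$, $m_x^\alpha(v)=(1-\alpha)/d_x$ for $v\in N(x)$, $m_x^\alpha(v)=0$ otherwise. The transportation distance between probability distributions $m_1,m_2$ on $V(G)$ is $W(m_1,m_2)=\inf_A\sum_{x,y}A(x,y)d(x,y)$ over couplings $A:V\times V\to[0,1]$ with marginals $m_1,m_2$. For distinct $x,y$, $\kappa_\alpha(x,y)=1-W(m_x^\alpha,m_y^\alpha)/d(x,y)$ and $\kappa_{LLY}(x,y)=\lim_{\alpha\to1}\kappa_\alpha(x,y)/(1-\alpha)$. (It is known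 that under the curvature hypothesis, $\mathrm{diam}(G)\le 2/\kappa$.) *)

theory Defs
  imports "HOL-Analysis.Analysis"
begin

definition simple_graph :: "'a set \<Rightarrow> ('a \<Rightarrow> 'a \<Rightarrow> bool) \<Rightarrow> bool" where
  "simple_graph V E \<longleftrightarrow> finite V \<and> (\<forall>u v. E u v \<longrightarrow> u \<in> V \<and> v \<in> V)
     \<and> (\<forall>u v. E u v \<longrightarrow> E v u) \<and> (\<forall>u. \<not> E u u)"

inductive walk :: "('a \<Rightarrow> 'a \<Rightarrow> bool) \<Rightarrow> nat \<Rightarrow> 'a \<Rightarrow> 'a \<Rightarrow> bool" for E where
  walk_refl: "walk E 0 u u"
| walk_step: "E u w \<Longrightarrow> walk E n w v \<Longrightarrow> walk E (Suc n) u v"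

definition connected_graph :: "'a set \<Rightarrow> ('a \<Rightarrow> 'a \<Rightarrow> bool) \<Rightarrow> bool" where
  "connected_graph V E \<longleftrightarrow> (\<forall>u\<in>V. \<forall>v\<in>V. \<exists>n. walk E n u v)"

definition gdist :: "('a \<Rightarrow> 'a \<Rightarrow> bool) \<Rightarrow> 'a \<Rightarrow> 'a \<Rightarrow> nat" where
  "gdist E u v = (LEAST n. walk E n u v)"

definition diam :: "'a set \<Rightarrow> ('a \<Rightarrow> 'a \<Rightarrow> bool) \<Rightarrow> nat" where
  "diam V E = Max {gdist E u v | u v. u \<in> V \<and> v \<in> V}"

definition nbhd :: "'a set \<Rightarrow> ('a \<Rightarrow> 'a \<Rightarrow> bool) \<Rightarrow> 'a \<Rightarrow> 'a set" where
  "nbhd V E v = {u \<in> V. E v u}"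

definition deg :: "'a set \<Rightarrow> ('a \<Rightarrow> 'a \<Rightarrow> bool) \<Rightarrow> 'a \<Rightarrow> nat" where
  "deg V E v = card (nbhd V E v)"

definition Gamma_minus :: "'a set \<Rightarrow> ('a \<Rightarrow> 'a \<Rightarrow> bool) \<Rightarrow> 'a \<Rightarrow> 'a \<Rightarrow> 'a set" where
  "Gamma_minus V E x y = {u \<in> nbhd V E y. gdist E x u + 1 = gdist E x y}"

definition Gamma_zero :: "'a set \<Rightarrow> ('a \<Rightarrow> 'a \<Rightarrow> bool) \<Rightarrow> 'a \<Rightarrow> 'a \<Rightarrow> 'a set" where
  "Gamma_zero V E x y = {u \<in> nbhd V E y. gdist E x u = gdist E x y}"

definition Gamma_plus :: "'a set \<Rightarrow> ('a \<Rightarrow> 'a \<Rightarrow> bool) \<Rightarrow> 'a \<Rightarrow> 'a \<Rightarrow> 'a set" where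
  "Gamma_plus V E x y = {u \<in> nbhd V E y. gdist E x u = gdist E x y + 1}"

definition has_C3 :: "'a set \<Rightarrow> ('a \<Rightarrow> 'a \<Rightarrow> bool) \<Rightarrow> bool" where
  "has_C3 V E \<longleftrightarrow> (\<exists>a\<in>V. \<exists>b\<in>V. \<exists>c\<in>V. distinct [a, b, c] \<and> E a b \<and> E b c \<and> E c a)"

definition has_C5 :: "'a set \<Rightarrow> ('a \<Rightarrow> 'a \<Rightarrow> bool) \<Rightarrow> bool" where
  "has_C5 V E \<longleftrightarrow> (\<exists>a\<in>V. \<exists>b\<in>V. \<exists>c\<in>V. \<exists>d\<in>V. \<exists>e\<in>V. distinct [a, b, c, d, e]
      \<and> E a b \<and> E b c \<and> E c d \<and> E d e \<and> E e a)"

definition lazy_walk :: "'a set \<Rightarrow> ('a \<Rightarrow> 'a \<Rightarrow> bool) \<Rightarrow> real \<Rightarrow> 'a \<Rightarrow> 'a \<Rightarrow> real" where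
  "lazy_walk V E \<alpha> x v =
     (if v = x then \<alpha> else if v \<in> nbhd V E x then (1 - \<alpha>) / real (deg V E x) else 0)"

definition coupling :: "'a set \<Rightarrow> ('a \<Rightarrow> real) \<Rightarrow> ('a \<Rightarrow> real) \<Rightarrow> ('a \<Rightarrow> 'a \<Rightarrow> real) \<Rightarrow> bool" where
  "coupling V m1 m2 A \<longleftrightarrow>
     (\<forall>x\<in>V. \<forall>y\<in>V. 0 \<le> A x y \<and> A x y \<le> 1)
     \<and> (\<forall>x\<in>V. (\<Sum>y\<in>V. A x y) = m1 x)
     \<and> (\<forall>y\<in>V. (\<Sum>x\<in>V. A x y) = m2 y)"

definition transport :: "'a set \<Rightarrow> ('a \<Rightarrow> 'a \<Rightarrow> bool) \<Rightarrow> ('a \<Rightarrow> real) \<Rightarrow> ('a \<Rightarrow> real) \<Rightarrow> real" where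
  "transport V E m1 m2 =
     Inf {(\<Sum>x\<in>V. \<Sum>y\<in>V. A x y * real (gdist E x y)) | A. coupling V m1 m2 A}"

definition kappa_alpha :: "'a set \<Rightarrow> ('a \<Rightarrow> 'a \<Rightarrow> bool) \<Rightarrow> real \<Rightarrow> 'a \<Rightarrow> 'a \<Rightarrow> real" where
  "kappa_alpha V E \<alpha> x y =
     1 - transport V E (lazy_walk V E \<alpha> x) (lazy_walk V E \<alpha> y) / real (gdist E x y)"

definition kappa_LLY :: "'a set \<Rightarrow> ('a \<Rightarrow> 'a \<Rightarrow> bool) \<Rightarrow> 'a \<Rightarrow> 'a \<Rightarrow> real" where
  "kappa_LLY V E x y = Lim (at_left 1) (\<lambda>\<alpha>. kappa_alpha V E \<alpha> x y / (1 - \<alpha>))"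

end

theory Submission
  imports Defs
begin

(* Write L = d(x,-) and D(c) = (|Gamma^0_x(c)| + |Gamma^+_x(c)| - |Gamma^-_x(c)|) / d_c.
   For an edge wc with L(c) = L(w) + 1, the potentials f_c = L + 1[Gamma^0_x(c)] and
   f_w = L + 1[Gamma^0_x(w)] satisfy f_c(u) - f_w(u') <= d(u,u') whenever u' = w or u' ~ w:
   the only critical case is u in Gamma^0_x(c), u' not in Gamma^0_x(w), and there a short
   path from u to u' would close a triangle or a pentagon through c and w.  The expectations
   of f_c, f_w under the lazy walks from c, w are L(c) + (1-alpha) D(c) and
   L(w) + (1-alpha) D(w), so Kantorovich duality gives
   kappa_alpha(c,w) <= (1-alpha) (D(w) - D(c)), hence kappa_LLY(c,w) <= D(w) - D(c).
   As D <= 1 everywhere, following a shortest path from x to y yields D(y) <= 1 - i kappa,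
   which is the claim once d_y = |Gamma^-| + |Gamma^0| + |Gamma^+| is expanded. *)

lemma walk_append: "walk E n u v \<Longrightarrow> walk E m v w \<Longrightarrow> walk E (n + m) u w"
  by (induction rule: walk.induct) (auto intro: walk.walk_step)

lemma walk_snoc: "walk E n u v \<Longrightarrow> E v w \<Longrightarrow> walk E (Suc n) u w"
  using walk_append[of E n u v 1 w] by (auto intro: walk.intros)

inductive_cases walk_0E: "walk E 0 u v"
inductive_cases walk_SucE: "walk E (Suc n) u v"

lemma gdist_le: "walk E n u v \<Longrightarrow> gdist E u v \<le> n"
  unfolding gdist_def by (rule Least_le)

locale sgraph =
  fixes V :: "'a set" and E :: "'a \<Rightarrow> 'a \<Rightarrow> bool"
  assumes simple: "simple_graph V E"
begin

lemma finite_V: "finite V"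
  using simple by (simp add: simple_graph_def)

lemma edge_sym: "E u v \<Longrightarrow> E v u"
  using simple by (simp add: simple_graph_def)

lemma edge_irrefl: "\<not> E u u"
  using simple by (simp add: simple_graph_def)

lemma edge_in_V: "E u v \<Longrightarrow> u \<in> V" "E u v \<Longrightarrow> v \<in> V"
  using simple by (simp_all add: simple_graph_def)

lemma walk_rev: "walk E n u v \<Longrightarrow> walk E n v u"
  by (induction rule: walk.induct) (auto intro: walk.walk_refl walk_snoc edge_sym)

lemma gdist_edge:
  assumes uv: "E u v"
  shows "gdist E u v = 1"
proof -
  from uv have walk1: "walk E 1 u v"
    by (auto intro: walk.intros)
  then have "walk E (gdist E u v) u v"
    unfolding gdist_def by (rule LeastI)
  moreover have "\<not> walk E 0 u v"
    using uv edge_irrefl by (auto elim: walk_0E)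
  ultimately have "gdist E u v \<noteq> 0"
    by metis
  with gdist_le[OF walk1] show ?thesis
    by simp
qed

lemma finite_nbhd: "finite (nbhd V E c)"
  using finite_V by (simp add: nbhd_def)

lemma deg_pos:
  assumes "E c w"
  shows "deg V E c > 0"
proof -
  from assms have "w \<in> nbhd V E c"
    using edge_in_V by (simp add: nbhd_def)
  then show ?thesis
    using finite_nbhd card_gt_0_iff unfolding deg_def by blast
qed

lemma no_C3_triangle:
  assumes "\<not> has_C3 V E" "E a b" "E b c" "E c a"
  shows False
proof -
  have "distinct [a, b, c]"
    using assms(2-4) edge_irrefl by auto
  then show False
    using assms edge_in_V unfolding has_C3_def by blast
qed

lemma no_C5_pentagon:
  assumes "\<not> has_C5 V E" "distinct [a, b, c, d, e]" "E a b" "E b c" "E c d" "E d e" "E e a"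
  shows False
  using assms edge_in_V unfolding has_C5_def by blast

lemma finite_Gammas:
  "finite (Gamma_minus V E x c)" "finite (Gamma_zero V E x c)" "finite (Gamma_plus V E x c)"
  using finite_nbhd by (simp_all add: Gamma_minus_def Gamma_zero_def Gamma_plus_def)

end

lemma Gammas_disjoint:
  "Gamma_minus V E x c \<inter> Gamma_zero V E x c = {}"
  "(Gamma_minus V E x c \<union> Gamma_zero V E x c) \<inter> Gamma_plus V E x c = {}"
  by (auto simp: Gamma_minus_def Gamma_zero_def Gamma_plus_def)

locale connected_sgraph = sgraph +
  assumes connected: "connected_graph V E"
begin

lemma walk_gdist:
  assumes "u \<in> V" "v \<in> V"
  shows "walk E (gdist E u v) u v"
proof -
  obtain n where "walk E n u v"
    using connected assms unfolding connected_graph_def by blast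
  then show ?thesis
    unfolding gdist_def by (rule LeastI)
qed

lemma gdist_commute: "u \<in> V \<Longrightarrow> v \<in> V \<Longrightarrow> gdist E u v = gdist E v u"
  by (meson antisym gdist_le walk_gdist walk_rev)

lemma gdist_triangle:
  "a \<in> V \<Longrightarrow> b \<in> V \<Longrightarrow> c \<in> V \<Longrightarrow> gdist E a c \<le> gdist E a b + gdist E b c"
  by (meson gdist_le walk_append walk_gdist)

lemma gdist_eq_0: "u \<in> V \<Longrightarrow> v \<in> V \<Longrightarrow> gdist E u v = 0 \<Longrightarrow> u = v"
  using walk_gdist[of u v] by (metis walk_0E)

lemma gdist_eq_1: "u \<in> V \<Longrightarrow> v \<in> V \<Longrightarrow> gdist E u v = 1 \<Longrightarrow> E u v"
  using walk_gdist[of u v] by (metis One_nat_def walk_0E walk_SucE)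

lemma gdist_eq_2: "u \<in> V \<Longrightarrow> v \<in> V \<Longrightarrow> gdist E u v = 2 \<Longrightarrow> \<exists>z. E u z \<and> E z v"
  using walk_gdist[of u v] by (metis numeral_2_eq_2 walk_0E walk_SucE)

lemma gdist_edge_le:
  assumes "x \<in> V" "E u v"
  shows "gdist E x v \<le> gdist E x u + 1"
  using gdist_triangle[OF assms(1) edge_in_V[OF assms(2)]] gdist_edge[OF assms(2)] by simp

lemma gdist_Suc_predecessor:
  assumes "x \<in> V" "c \<in> V" "gdist E x c = Suc j"
  obtains w where "E w c" "gdist E x w = j"
proof -
  have "walk E (Suc j) c x"
    using walk_rev[OF walk_gdist[OF assms(1,2)]] assms(3) by simp
  then obtain w where cw: "E c w" and wx: "walk E j w x"
    by (rule walk_SucE)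
  from wx have "gdist E x w \<le> j"
    by (rule gdist_le[OF walk_rev])
  moreover have "Suc j \<le> gdist E x w + 1"
    using gdist_edge_le[OF assms(1) edge_sym[OF cw]] assms(3) by simp
  ultimately have "gdist E x w = j"
    by simp
  with edge_sym[OF cw] show thesis
    by (rule that)
qed

lemma nbhd_levels:
  assumes "x \<in> V"
  shows "nbhd V E c = Gamma_minus V E x c \<union> Gamma_zero V E x c \<union> Gamma_plus V E x c"
proof -
  have "gdist E x c \<le> gdist E x u + 1" "gdist E x u \<le> gdist E x c + 1" if "u \<in> nbhd V E c" for u
    using that gdist_edge_le[OF assms] edge_sym by (auto simp: nbhd_def)
  then show ?thesis
    by (fastforce simp: Gamma_minus_def Gamma_zero_def Gamma_plus_def)
qed

lemma deg_eq_card_levels: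
  assumes "x \<in> V"
  shows "deg V E c
           = card (Gamma_minus V E x c) + card (Gamma_zero V E x c) + card (Gamma_plus V E x c)"
  unfolding deg_def nbhd_levels[OF assms]
  by (simp add: card_Un_disjoint finite_Gammas Gammas_disjoint)

end

lemma coupling_cost_ge_dual:
  fixes g1 g2 :: "'a \<Rightarrow> real" and D :: "'a \<Rightarrow> 'a \<Rightarrow> real"
  assumes fin: "finite V" and A: "coupling V m1 m2 A"
    and lip: "\<And>u u'. u \<in> V \<Longrightarrow> u' \<in> V \<Longrightarrow> m1 u \<noteq> 0 \<Longrightarrow> m2 u' \<noteq> 0
                \<Longrightarrow> g1 u - g2 u' \<le> D u u'"
  shows "(\<Sum>u\<in>V. m1 u * g1 u) - (\<Sum>u'\<in>V. m2 u' * g2 u')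
           \<le> (\<Sum>u\<in>V. \<Sum>u'\<in>V. A u u' * D u u')"
proof -
  have nonneg: "0 \<le> A u u'" if "u \<in> V" "u' \<in> V" for u u'
    using A that by (simp add: coupling_def)
  have rows: "(\<Sum>u'\<in>V. A u u') = m1 u" if "u \<in> V" for u
    using A that by (simp add: coupling_def)
  have cols: "(\<Sum>u\<in>V. A u u') = m2 u'" if "u' \<in> V" for u'
    using A that by (simp add: coupling_def)
  have "A u u' * (g1 u - g2 u') \<le> A u u' * D u u'" if uu': "u \<in> V" "u' \<in> V" for u u'
  proof (cases "A u u' = 0")
    case False
    then have pos: "0 < A u u'"
      using nonneg[OF uu'] by simp
    have "A u u' \<le> m1 u"
      unfolding rows[OF uu'(1), symmetric] by (rule member_le_sum) (use uu' nonneg fin in auto)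
    moreover have "A u u' \<le> m2 u'"
      unfolding cols[OF uu'(2), symmetric] by (rule member_le_sum) (use uu' nonneg fin in auto)
    ultimately have "g1 u - g2 u' \<le> D u u'"
      using pos lip[OF uu'] by simp
    with pos show ?thesis
      by (simp add: mult_left_mono)
  qed simp
  then have "(\<Sum>u\<in>V. \<Sum>u'\<in>V. A u u' * (g1 u - g2 u')) \<le> (\<Sum>u\<in>V. \<Sum>u'\<in>V. A u u' * D u u')"
    by (intro sum_mono) auto
  moreover have "(\<Sum>u\<in>V. \<Sum>u'\<in>V. A u u' * g1 u) = (\<Sum>u\<in>V. m1 u * g1 u)"
    by (intro sum.cong refl) (simp add: rows sum_distrib_right[symmetric])
  moreover have "(\<Sum>u\<in>V. \<Sum>u'\<in>V. A u u' * g2 u') = (\<Sum>u'\<in>V. m2 u' * g2 u')"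
    by (subst sum.swap) (intro sum.cong refl, simp add: cols sum_distrib_right[symmetric])
  ultimately show ?thesis
    by (simp add: right_diff_distrib sum_subtractf)
qed

lemma transport_le_cost:
  assumes "coupling V m1 m2 A"
  shows "transport V E m1 m2 \<le> (\<Sum>u\<in>V. \<Sum>v\<in>V. A u v * real (gdist E u v))"
  unfolding transport_def
proof (rule cInf_lower)
  show "bdd_below {\<Sum>u\<in>V. \<Sum>v\<in>V. A u v * real (gdist E u v) |A. coupling V m1 m2 A}"
    by (rule bdd_belowI[of _ 0]) (auto simp: coupling_def intro!: sum_nonneg)
qed (use assms in blast)

lemma transport_ge_dual:
  fixes g1 g2 :: "'a \<Rightarrow> real"
  assumes "finite V" "\<exists>A. coupling V m1 m2 A"
    and "\<And>u u'. u \<in> V \<Longrightarrow> u' \<in> V \<Longrightarrow> m1 u \<noteq> 0 \<Longrightarrow> m2 u' \<noteq> 0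
           \<Longrightarrow> g1 u - g2 u' \<le> real (gdist E u u')"
  shows "(\<Sum>u\<in>V. m1 u * g1 u) - (\<Sum>u'\<in>V. m2 u' * g2 u') \<le> transport V E m1 m2"
  unfolding transport_def
  by (rule cInf_greatest) (use assms coupling_cost_ge_dual[OF assms(1) _ assms(3)] in auto)

lemma coupling_product:
  fixes m1 m2 :: "'a \<Rightarrow> real"
  assumes "\<And>u. u \<in> V \<Longrightarrow> 0 \<le> m1 u \<and> m1 u \<le> 1" "\<And>u. u \<in> V \<Longrightarrow> 0 \<le> m2 u \<and> m2 u \<le> 1"
    and "(\<Sum>u\<in>V. m1 u) = 1" "(\<Sum>u\<in>V. m2 u) = 1"
  shows "coupling V m1 m2 (\<lambda>u v. m1 u * m2 v)"
  using assms
  by (auto simp: coupling_def mult_le_one sum_distrib_left[symmetric] sum_distrib_right[symmetric])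

lemma coupling_convex_comb:
  assumes "coupling V m1 m2 A" "coupling V n1 n2 B" "0 \<le> t" "t \<le> 1"
  shows "coupling V (\<lambda>u. t * m1 u + (1 - t) * n1 u) (\<lambda>v. t * m2 v + (1 - t) * n2 v)
           (\<lambda>u v. t * A u v + (1 - t) * B u v)"
  using assms unfolding coupling_def
  by (auto simp: sum.distrib sum_distrib_left[symmetric] intro!: convex_bound_le)

lemma coupling_dirac:
  assumes "finite V" "c \<in> V" "w \<in> V"
  shows "coupling V (\<lambda>u. of_bool (u = c)) (\<lambda>v. of_bool (v = w))
           (\<lambda>u v. of_bool (u = c \<and> v = w))"
  using assms unfolding coupling_def by auto

lemma transport_convex_comb_dirac_le:
  assumes fin: "finite V" and cw: "c \<in> V" "w \<in> V" and ex: "\<exists>A. coupling V m1 m2 A"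
    and t: "0 < t" "t \<le> 1"
  shows "transport V E (\<lambda>u. t * m1 u + (1 - t) * of_bool (u = c))
           (\<lambda>v. t * m2 v + (1 - t) * of_bool (v = w))
         \<le> t * transport V E m1 m2 + (1 - t) * real (gdist E c w)"
proof -
  let ?W = "transport V E (\<lambda>u. t * m1 u + (1 - t) * of_bool (u = c))
              (\<lambda>v. t * m2 v + (1 - t) * of_bool (v = w))"
  let ?cost = "\<lambda>A. \<Sum>u\<in>V. \<Sum>v\<in>V. A u v * real (gdist E u v)"
  have bound: "(?W - (1 - t) * real (gdist E c w)) / t \<le> ?cost A" if A: "coupling V m1 m2 A" for A
  proof -
    have "?W \<le> ?cost (\<lambda>u v. t * A u v + (1 - t) * of_bool (u = c \<and> v = w))"
      using t by (intro transport_le_cost coupling_convex_comb[OF A coupling_dirac[OF fin cw]]) auto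
    also have "\<dots> = t * ?cost A + (1 - t) * ?cost (\<lambda>u v. of_bool (u = c \<and> v = w))"
      by (simp add: distrib_right sum.distrib sum_distrib_left mult.assoc)
    also have "?cost (\<lambda>u v. of_bool (u = c \<and> v = w)) = real (gdist E c w)"
      using fin cw
      by (simp add: of_bool_conj mult.assoc sum_distrib_left[symmetric] Int_insert_right)
    finally show ?thesis
      using t by (simp add: divide_le_eq mult.commute)
  qed
  have "(?W - (1 - t) * real (gdist E c w)) / t \<le> transport V E m1 m2"
    unfolding transport_def[of V E m1 m2] using ex bound by (intro cInf_greatest) auto
  then show ?thesis
    using t by (simp add: divide_le_eq algebra_simps)
qed

lemma Lim_at_left_le:
  fixes f :: "real \<Rightarrow> real"
  assumes "a < b"
    and mono: "\<And>s t. a < s \<Longrightarrow> s \<le> t \<Longrightarrow> t < b \<Longrightarrow> f s \<le> f t"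
    and bound: "\<And>s. a < s \<Longrightarrow> s < b \<Longrightarrow> f s \<le> K"
  shows "Lim (at_left b) f \<le> K"
proof -
  have "(f \<longlongrightarrow> Sup (f ` ({..<b} \<inter> {a<..}))) (at b within {..<b} \<inter> {a<..})"
    by (rule Lim_left_bound[where K = K]) (auto intro: mono bound)
  moreover have "at b within {..<b} \<inter> {a<..} = at_left b"
    by (rule at_within_nhd[of _ "{a<..}"]) (use assms(1) in auto)
  ultimately have lim: "(f \<longlongrightarrow> Sup (f ` ({..<b} \<inter> {a<..}))) (at_left b)"
    by simp
  have "eventually (\<lambda>s. f s \<le> K) (at_left b)"
    using eventually_at_left_real[OF assms(1)] by eventually_elim (auto intro: bound)
  with lim show ?thesis
    using tendsto_Lim[OF _ lim] tendsto_upperbound by fastforce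
qed

lemma lazy_walk_support: "lazy_walk V E \<alpha> c u \<noteq> 0 \<Longrightarrow> u = c \<or> E c u"
  by (auto simp: lazy_walk_def nbhd_def split: if_splits)

lemma lazy_walk_bounds:
  assumes "deg V E c > 0" "0 \<le> \<alpha>" "\<alpha> \<le> 1"
  shows "0 \<le> lazy_walk V E \<alpha> c u \<and> lazy_walk V E \<alpha> c u \<le> 1"
proof -
  have "(1 - \<alpha>) / real (deg V E c) \<le> 1 - \<alpha>"
    using assms by (simp add: divide_le_eq mult_le_cancel_left1)
  then show ?thesis
    using assms by (auto simp: lazy_walk_def)
qed

lemma lazy_walk_convex_comb:
  assumes "a < 1"
  shows "lazy_walk V E b c u
           = (1 - b) / (1 - a) * lazy_walk V E a c u + (1 - (1 - b) / (1 - a)) * of_bool (u = c)"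
proof -
  define t where "t = (1 - b) / (1 - a)"
  have "t * (1 - a) = 1 - b"
    using assms by (simp add: t_def)
  then have "b = t * a + (1 - t)" "(1 - b) / real (deg V E c) = t * ((1 - a) / real (deg V E c))"
    by (simp_all add: algebra_simps times_divide_eq_right[symmetric])
  then show ?thesis
    unfolding t_def[symmetric] by (auto simp: lazy_walk_def)
qed

context sgraph
begin

lemma lazy_walk_expectation:
  fixes f :: "'a \<Rightarrow> real"
  assumes "c \<in> V"
  shows "(\<Sum>u\<in>V. lazy_walk V E \<alpha> c u * f u)
           = \<alpha> * f c + (1 - \<alpha>) / real (deg V E c) * (\<Sum>u\<in>nbhd V E c. f u)"
proof -
  have "c \<notin> nbhd V E c" and "nbhd V E c \<subseteq> V"
    using edge_irrefl by (auto simp: nbhd_def)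
  then have "lazy_walk V E \<alpha> c u
               = of_bool (u = c) * \<alpha>
                 + of_bool (u \<in> nbhd V E c) * ((1 - \<alpha>) / real (deg V E c))" for u
    by (auto simp: lazy_walk_def)
  then have "(\<Sum>u\<in>V. lazy_walk V E \<alpha> c u * f u)
               = (\<Sum>u\<in>V. of_bool (u = c) * (\<alpha> * f u))
                 + (\<Sum>u\<in>V. of_bool (u \<in> nbhd V E c) * ((1 - \<alpha>) / real (deg V E c) * f u))"
    by (simp only: distrib_right sum.distrib mult.assoc)
  also have "\<dots> = \<alpha> * f c + (1 - \<alpha>) / real (deg V E c) * (\<Sum>u\<in>nbhd V E c. f u)"
    using assms \<open>nbhd V E c \<subseteq> V\<close>
    by (simp only: sum_of_bool_mult_eq[OF finite_V])
      (simp add: Int_insert_right Int_absorb1 sum_distrib_left)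
  finally show ?thesis .
qed

lemma lazy_walk_total: "c \<in> V \<Longrightarrow> deg V E c > 0 \<Longrightarrow> (\<Sum>u\<in>V. lazy_walk V E \<alpha> c u) = 1"
  using lazy_walk_expectation[of c \<alpha> "\<lambda>_. 1"] by (simp add: deg_def)

lemma lazy_walk_coupling_exists:
  assumes "c \<in> V" "w \<in> V" "deg V E c > 0" "deg V E w > 0" "0 \<le> \<alpha>" "\<alpha> \<le> 1"
  shows "\<exists>A. coupling V (lazy_walk V E \<alpha> c) (lazy_walk V E \<alpha> w) A"
  using assms
  by (intro exI[of _ "\<lambda>u v. lazy_walk V E \<alpha> c u * lazy_walk V E \<alpha> w v"] coupling_product
      lazy_walk_bounds lazy_walk_total) auto

lemma kappa_alpha_div_mono:
  assumes cw: "E c w" and ab: "0 < a" "a \<le> b" "b < 1"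
  shows "kappa_alpha V E a c w / (1 - a) \<le> kappa_alpha V E b c w / (1 - b)"
proof -
  define t where "t = (1 - b) / (1 - a)"
  have t: "0 < t" "t \<le> 1"
    using ab by (auto simp: t_def)
  have mix: "lazy_walk V E b v = (\<lambda>u. t * lazy_walk V E a v u + (1 - t) * of_bool (u = v))" for v
    unfolding t_def using ab by (intro ext lazy_walk_convex_comb) simp
  have "\<exists>A. coupling V (lazy_walk V E a c) (lazy_walk V E a w) A"
    using ab edge_in_V[OF cw] deg_pos[OF cw] deg_pos[OF edge_sym[OF cw]]
    by (intro lazy_walk_coupling_exists) auto
  from transport_convex_comb_dirac_le[where E = E, OF finite_V edge_in_V[OF cw] this t]
  have "t * kappa_alpha V E a c w \<le> kappa_alpha V E b c w"
    unfolding kappa_alpha_def mix[symmetric] gdist_edge[OF cw] by (simp add: algebra_simps)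
  moreover have "kappa_alpha V E a c w / (1 - a) = t * kappa_alpha V E a c w / (1 - b)"
    using ab by (simp add: t_def)
  ultimately show ?thesis
    using ab by (simp add: divide_right_mono)
qed

(* Lim is defined by THE, so the bound needs the limit to exist; it does because
   kappa_alpha / (1 - alpha) is monotone in alpha. *)
lemma kappa_LLY_le:
  assumes "E c w"
    and bound: "\<And>\<alpha>. 0 < \<alpha> \<Longrightarrow> \<alpha> < 1 \<Longrightarrow> kappa_alpha V E \<alpha> c w / (1 - \<alpha>) \<le> K"
  shows "kappa_LLY V E c w \<le> K"
  unfolding kappa_LLY_def
  by (rule Lim_at_left_le[of 0]) (use kappa_alpha_div_mono[OF assms(1)] bound in auto)

end

definition level_drift :: "'a set \<Rightarrow> ('a \<Rightarrow> 'a \<Rightarrow> bool) \<Rightarrow> 'a \<Rightarrow> 'a \<Rightarrow> real" where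
  "level_drift V E x c =
     (real (card (Gamma_zero V E x c)) + real (card (Gamma_plus V E x c))
        - real (card (Gamma_minus V E x c))) / real (deg V E c)"

definition level_potential :: "'a set \<Rightarrow> ('a \<Rightarrow> 'a \<Rightarrow> bool) \<Rightarrow> 'a \<Rightarrow> 'a \<Rightarrow> 'a \<Rightarrow> real" where
  "level_potential V E x c u = real (gdist E x u) + of_bool (u \<in> Gamma_zero V E x c)"

context connected_sgraph
begin

lemma level_drift_le_one: "x \<in> V \<Longrightarrow> level_drift V E x c \<le> 1"
  using deg_eq_card_levels[of x c] by (simp add: level_drift_def divide_le_eq)

lemma nbhd_sum_level_potential:
  assumes "x \<in> V"
  shows "(\<Sum>u\<in>nbhd V E c. level_potential V E x c u)
           = real (deg V E c) * real (gdist E x c) + real (card (Gamma_zero V E x c))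
             + real (card (Gamma_plus V E x c)) - real (card (Gamma_minus V E x c))"
proof -
  let ?L = "real (gdist E x c)" and ?pot = "level_potential V E x c"
  have "(\<Sum>u\<in>nbhd V E c. ?pot u)
          = (\<Sum>u\<in>Gamma_minus V E x c. ?pot u) + (\<Sum>u\<in>Gamma_zero V E x c. ?pot u)
            + (\<Sum>u\<in>Gamma_plus V E x c. ?pot u)"
    unfolding nbhd_levels[OF assms] by (simp add: sum.union_disjoint finite_Gammas Gammas_disjoint)
  also have "(\<Sum>u\<in>Gamma_minus V E x c. ?pot u) = (\<Sum>u\<in>Gamma_minus V E x c. ?L - 1)"
    by (intro sum.cong refl) (auto simp: level_potential_def Gamma_minus_def Gamma_zero_def)
  also have "(\<Sum>u\<in>Gamma_zero V E x c. ?pot u) = (\<Sum>u\<in>Gamma_zero V E x c. ?L + 1)"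
    by (intro sum.cong refl) (auto simp: level_potential_def Gamma_zero_def)
  also have "(\<Sum>u\<in>Gamma_plus V E x c. ?pot u) = (\<Sum>u\<in>Gamma_plus V E x c. ?L + 1)"
    by (intro sum.cong refl) (auto simp: level_potential_def Gamma_plus_def Gamma_zero_def)
  finally show ?thesis
    using deg_eq_card_levels[OF assms, of c] by (simp add: algebra_simps)
qed

lemma lazy_walk_expectation_level_potential:
  assumes "x \<in> V" "c \<in> V" "deg V E c > 0"
  shows "(\<Sum>u\<in>V. lazy_walk V E \<alpha> c u * level_potential V E x c u)
           = real (gdist E x c) + (1 - \<alpha>) * level_drift V E x c"
proof -
  have "level_potential V E x c c = real (gdist E x c)"
    using edge_irrefl by (simp add: level_potential_def Gamma_zero_def nbhd_def)
  then have "(\<Sum>u\<in>V. lazy_walk V E \<alpha> c u * level_potential V E x c u)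
               = \<alpha> * real (gdist E x c) + (1 - \<alpha>) / real (deg V E c)
                 * (real (deg V E c) * real (gdist E x c) + real (card (Gamma_zero V E x c))
                    + real (card (Gamma_plus V E x c)) - real (card (Gamma_minus V E x c)))"
    by (simp add: lazy_walk_expectation[OF assms(2)] nbhd_sum_level_potential[OF assms(1)])
  also have "\<dots> = real (gdist E x c) + (1 - \<alpha>) * level_drift V E x c"
    using assms(3) by (simp add: level_drift_def field_simps)
  finally show ?thesis .
qed

lemma level_potential_gap:
  assumes nC3: "\<not> has_C3 V E" and nC5: "\<not> has_C5 V E" and x: "x \<in> V"
    and wc: "E w c" and lev: "gdist E x c = gdist E x w + 1"
    and u: "u \<in> Gamma_zero V E x c" and u': "u' = w \<or> E w u'" "u' \<notin> Gamma_zero V E x w"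
  shows "gdist E x u + 1 \<le> gdist E x u' + gdist E u u'"
proof -
  let ?L = "gdist E x" and ?D = "gdist E u u'"
  have cu: "E c u" and Lu: "?L u = ?L w + 1" and uV: "u \<in> V"
    using u lev by (auto simp: Gamma_zero_def nbhd_def)
  have u'V: "u' \<in> V"
    using u'(1) edge_in_V wc by blast
  have lower: "?L u \<le> ?L u' + ?D"
    using gdist_triangle[OF x u'V uV] gdist_commute[OF uV u'V] by simp
  have "?L u' \<le> ?L w + 1" "?L w \<le> ?L u' + 1" if "E w u'"
    using gdist_edge_le[OF x that] gdist_edge_le[OF x edge_sym[OF that]] by simp_all
  moreover have "u' = w \<or> E w u' \<and> ?L u' \<noteq> ?L w"
    using u' u'V by (auto simp: Gamma_zero_def nbhd_def)
  ultimately consider (a) "u' = w"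
    | (b) "E w u'" "?L u' = ?L w + 1"
    | (c) "E w u'" "?L u' + 1 = ?L w"
    by fastforce
  then show ?thesis
  proof cases
    case a
    have "?D \<noteq> 1"
      using gdist_eq_1[OF uV u'V] no_C3_triangle[OF nC3 cu _ wc] a by blast
    with lower show ?thesis
      using a Lu by simp
  next
    case b
    have "?D \<noteq> 0"
      using gdist_eq_0[OF uV u'V] no_C3_triangle[OF nC3 cu _ wc] edge_sym b(1) by blast
    with lower show ?thesis
      using b Lu by simp
  next
    case c
    have "?D \<noteq> 2"
    proof
      assume "?D = 2"
      then obtain z where uz: "E u z" and zu': "E z u'"
        using gdist_eq_2[OF uV u'V] by blast
      have "?L u \<le> ?L z + 1" "?L z \<le> ?L u' + 1"
        using gdist_edge_le[OF x edge_sym[OF uz]] gdist_edge_le[OF x edge_sym[OF zu']]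
        by simp_all
      then have "?L z = ?L w"
        using c Lu by simp
      moreover have "z \<noteq> w"
        using no_C3_triangle[OF nC3 cu _ wc] uz by blast
      ultimately have "distinct [c, u, z, u', w]"
        using c Lu lev cu edge_irrefl by auto
      then show False
        using no_C5_pentagon[OF nC5 _ cu uz zu' edge_sym[OF c(1)] wc] by blast
    qed
    with lower show ?thesis
      using c Lu by simp
  qed
qed

lemma level_potential_lipschitz:
  assumes "\<not> has_C3 V E" "\<not> has_C5 V E" "x \<in> V" "E w c" "gdist E x c = gdist E x w + 1"
    and u: "u \<in> V" and u': "u' \<in> V" "u' = w \<or> E w u'"
  shows "level_potential V E x c u - level_potential V E x w u' \<le> real (gdist E u u')"
proof (cases "u \<in> Gamma_zero V E x c \<and> u' \<notin> Gamma_zero V E x w")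
  case True
  then have "gdist E x u + 1 \<le> gdist E x u' + gdist E u u'"
    using level_potential_gap[OF assms(1-5) _ u'(2)] by blast
  with True show ?thesis
    unfolding level_potential_def by simp
next
  case False
  have "gdist E x u \<le> gdist E x u' + gdist E u u'"
    using gdist_triangle[OF assms(3) u'(1) u] gdist_commute[OF u u'(1)] by simp
  with False show ?thesis
    unfolding level_potential_def by auto
qed

lemma kappa_alpha_le_level_drift_diff:
  assumes "\<not> has_C3 V E" "\<not> has_C5 V E" "x \<in> V" and wc: "E w c"
    and lev: "gdist E x c = gdist E x w + 1" and \<alpha>: "0 \<le> \<alpha>" "\<alpha> \<le> 1"
  shows "kappa_alpha V E \<alpha> c w \<le> (1 - \<alpha>) * (level_drift V E x w - level_drift V E x c)"
proof -
  have cw: "E c w"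
    using edge_sym[OF wc] .
  have V: "c \<in> V" "w \<in> V" and deg: "deg V E c > 0" "deg V E w > 0"
    using edge_in_V[OF wc] deg_pos[OF cw] deg_pos[OF wc] by simp_all
  have lip: "level_potential V E x c u - level_potential V E x w u' \<le> real (gdist E u u')"
    if "u \<in> V" "u' \<in> V" "lazy_walk V E \<alpha> c u \<noteq> 0" "lazy_walk V E \<alpha> w u' \<noteq> 0" for u u'
    using level_potential_lipschitz[OF assms(1-5) that(1,2)] lazy_walk_support[OF that(4)]
    by blast
  have "(\<Sum>u\<in>V. lazy_walk V E \<alpha> c u * level_potential V E x c u)
          - (\<Sum>u'\<in>V. lazy_walk V E \<alpha> w u' * level_potential V E x w u')
        \<le> transport V E (lazy_walk V E \<alpha> c) (lazy_walk V E \<alpha> w)"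
    by (rule transport_ge_dual[OF finite_V lazy_walk_coupling_exists[OF V deg \<alpha>] lip])
  then have "real (gdist E x c) + (1 - \<alpha>) * level_drift V E x c
               - (real (gdist E x w) + (1 - \<alpha>) * level_drift V E x w)
             \<le> transport V E (lazy_walk V E \<alpha> c) (lazy_walk V E \<alpha> w)"
    by (simp only: lazy_walk_expectation_level_potential[OF assms(3) V(1) deg(1)]
        lazy_walk_expectation_level_potential[OF assms(3) V(2) deg(2)])
  then show ?thesis
    using lev unfolding kappa_alpha_def gdist_edge[OF cw]
    by (simp add: algebra_simps)
qed

lemma kappa_LLY_le_level_drift_diff:
  assumes "\<not> has_C3 V E" "\<not> has_C5 V E" "x \<in> V" "E w c" "gdist E x c = gdist E x w + 1"
  shows "kappa_LLY V E c w \<le> level_drift V E x w - level_drift V E x c"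
proof (rule kappa_LLY_le[OF edge_sym[OF assms(4)]])
  fix \<alpha> :: real
  assume "0 < \<alpha>" "\<alpha> < 1"
  then show "kappa_alpha V E \<alpha> c w / (1 - \<alpha>) \<le> level_drift V E x w - level_drift V E x c"
    using kappa_alpha_le_level_drift_diff[OF assms, of \<alpha>]
    by (simp add: divide_le_eq mult.commute)
qed

lemma level_drift_le:
  assumes "\<not> has_C3 V E" "\<not> has_C5 V E" "x \<in> V"
    and curv: "\<forall>u v. E u v \<longrightarrow> \<kappa> \<le> kappa_LLY V E u v" and c: "c \<in> V"
  shows "level_drift V E x c \<le> 1 - real (gdist E x c) * \<kappa>"
  using c
proof (induction "gdist E x c" arbitrary: c)
  case 0
  then show ?case
    using level_drift_le_one[OF assms(3)] by simp
next
  case (Suc j)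
  obtain w where wc: "E w c" and lw: "gdist E x w = j"
    using gdist_Suc_predecessor[OF assms(3) Suc.prems Suc.hyps(2)[symmetric]] .
  have "\<kappa> \<le> kappa_LLY V E c w"
    using curv edge_sym[OF wc] by blast
  also have "\<dots> \<le> level_drift V E x w - level_drift V E x c"
    using kappa_LLY_le_level_drift_diff[OF assms(1-3) wc] lw Suc.hyps(2) by simp
  finally have "\<kappa> \<le> level_drift V E x w - level_drift V E x c" .
  moreover have "level_drift V E x w \<le> 1 - real j * \<kappa>"
    using Suc.hyps(1)[of w] edge_in_V[OF wc] lw by simp
  ultimately show ?case
    using Suc.hyps(2)[symmetric] by (simp add: algebra_simps)
qed

lemma card_Gamma_plus_zero_le:
  assumes "x \<in> V" "level_drift V E x c \<le> r"
  shows "real (card (Gamma_plus V E x c)) + real (card (Gamma_zero V E x c))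
           \<le> (1 + r) / 2 * real (deg V E c)"
proof (cases "deg V E c = 0")
  case True
  then show ?thesis
    using deg_eq_card_levels[OF assms(1), of c] by simp
next
  case False
  let ?d = "real (deg V E c)"
  have "real (card (Gamma_zero V E x c)) + real (card (Gamma_plus V E x c))
          - real (card (Gamma_minus V E x c)) \<le> r * ?d"
    using assms(2) False by (simp add: level_drift_def divide_le_eq mult.commute)
  moreover have "?d = real (card (Gamma_minus V E x c)) + real (card (Gamma_zero V E x c))
                   + real (card (Gamma_plus V E x c))"
    using deg_eq_card_levels[OF assms(1), of c] by simp
  moreover have "(1 + r) / 2 * ?d = ?d / 2 + r * ?d / 2"
    by (simp add: field_simps)
  ultimately show ?thesis
    by linarith
qed

end

theorem lemma2p1:
  fixes V :: "'a set" and E :: "'a \<Rightarrow> 'a \<Rightarrow> bool" and \<kappa> :: real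
    and x y :: 'a and i :: nat
  assumes "simple_graph V E"
    and "connected_graph V E"
    and "\<not> has_C3 V E"
    and "\<not> has_C5 V E"
    and "\<kappa> > 0"
    and "\<forall>u v. E u v \<longrightarrow> kappa_LLY V E u v \<ge> \<kappa>"
    and "x \<in> V" and "y \<in> V"
    and "gdist E x y = i"
    and "1 \<le> i" and "i \<le> diam V E"
    and "real (diam V E) \<le> real_of_int \<lfloor>2 / \<kappa>\<rfloor>"
  shows "real (card (Gamma_plus V E x y)) + real (card (Gamma_zero V E x y))
           \<le> (1 - real i * \<kappa> / 2) * real (deg V E y)"
proof -
  interpret connected_sgraph V E
    using assms(1,2) by unfold_locales
  have "level_drift V E x y \<le> 1 - real i * \<kappa>"
    using level_drift_le[OF assms(3,4,7,6,8)] assms(9) by simp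
  from card_Gamma_plus_zero_le[OF assms(7) this]
  show ?thesis
    by (simp add: field_simps)
qed

end
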